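(* Let $s_{1}, s_{2}, p_{1}, p_{2}, m, k \in \mathbb N$ with $m \geq s_{1}+s_{2}-1$. Then \begin{align*} \sum_{n=1}^\infty\frac{H_n^{(p_{1},s_{1})}H_n^{(p_{2},s_{2})}}{n^{m}\binom{n+k}{k}} &=\sum_{\ell_{1}=0}^{s_{1}-1}\sum_{t_{1}=0}^{s_{1}-1-\ell_{1}} \sum_{\ell_{2}=0}^{s_{2}-1}\sum_{t_{2}=0}^{s_{2}-1-\ell_{2}}a(s_{1},\ell_{1},t_{1})a(s_{2},\ell_{2},t_{2})\\ &\quad \times \sum_{r=1}^{k}(-1)^{r+1} r \binom{k}{r}\, T(p_{1}-\ell_{1},p_{2}-\ell_{2},m-t_{1}-t_{2},1,r,0)\,, \end{align*} where $T(q_1,q_2,u,1,r,0)=\sum_{n=1}^\infty\frac{H_n^{(q_{1})}H_n^{(q_{2})}}{n^{u}(n+r)}$. Consequently this sum can be expressed in terms of classical Euler sums, zeta values and generalized harmonic numbers.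
   Context: $\mathbb N=\{1,2,\dots\}$. For $n\in\mathbb N_0$ and $q\in\mathbb N$, $H_n^{(q)}=\sum_{j=1}^n j^{-q}$; for an integer $q\ge 0$, $H_n^{(-q)}$ denotes $\sum_{\ell=1}^n \ell^{q}$ (so $H_n^{(0)}=n$). Generalized hyperharmonic numbers: $H_n^{(p,1)}=H_n^{(p)}$, $H_n^{(p,r)}=\sum_{j=1}^n H_j^{(p,r-1)}$ for $r\ge2$. For $q_1,q_2\in\mathbb Z$, $u,r\in\mathbb N$, $T(q_{1},q_{2},u,1,r,0):=\sum_{n=1}^\infty\frac{H_n^{(q_{1})}H_n^{(q_{2})}}{n^{u}(n+r)}$. Bernoulli numbers $B_j^{+}$: $\frac{x}{1-e^{-x}}=\sum_{j\ge0}B_j^{+}\frac{x^j}{j!}$. The rational coefficients $a(r,m,j)$ ($r\in\mathbb N$, $0\le m\le r-1$, $0\le j\le r-1-m$) are defined by $a(1,0,0)=1$ and, for $r\ge1$: $a(r+1,r,0)=-\sum_{m=0}^{r-1} \frac{a(r,m,r-m-1)}{r-m}$; $a(r+1,m,\ell)=\sum_{j=\ell-1}^{r-1-m} \frac{a(r,m,j)}{j+1} \binom{j+1}{j-\ell+1}B_{j-\ell+1}^{+}$ for $0\leq m \leq r-1$, $1\leq \ell \leq r-m$; $a(r+1,m,0)=-\sum_{y=0}^{m} \sum_{j=\max\{0, m-y-1\}}^{r-1-y}a(r,y,j)D(r,m,j,y)$ for $0\leq m \leq r-1$, where $D(r,m,j,y)=\sum_{\ell=\max\{0, m-y-1\}}^{j}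 \frac{1}{j+1} \binom{j+1}{j-\ell}B_{j-\ell}^{+}\binom{\ell+1}{m-y}(-1)^{1+\ell-m+y}$. (These satisfy the known identity $H_n^{(p,r)}=\sum_{m=0}^{r-1}\sum_{j=0}^{r-1-m}a(r,m,j)n^jH_n^{(p-m)}$ for all $n,p\in\mathbb N$.) *)

theory Defs
  imports "HOL-Analysis.Analysis" "HOL-Computational_Algebra.Formal_Power_Series"
begin

(* Bernoulli numbers B_j^+ via  x/(1-e^{-x}) = sum_j B_j^+ x^j/j!  (formal power series) *)
definition bernoulli_plus :: "nat \<Rightarrow> real" where
  "bernoulli_plus j = fact j * fps_nth (fps_X / (1 - fps_exp (-1))) j"

definition harm :: "int \<Rightarrow> nat \<Rightarrow> real" where
  "harm q n = (if q \<ge> 0 then (\<Sum>j=1..n. 1 / (real j) ^ nat q)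
               else (\<Sum>l=1..n. (real l) ^ nat (- q)))"

(* generalized hyperharmonic numbers H_n^{(p,r)}, r \<ge> 1 (value at r = 0 irrelevant) *)
fun hyperharm :: "nat \<Rightarrow> nat \<Rightarrow> nat \<Rightarrow> real" where
  "hyperharm p 0 n = 0"
| "hyperharm p (Suc 0) n = harm (int p) n"
| "hyperharm p (Suc (Suc r)) n = (\<Sum>j=1..n. hyperharm p (Suc r) j)"

(* one step of the recursion: from a(r,.,.) to a(r+1,.,.), for r \<ge> 1 *)
definition a_step :: "nat \<Rightarrow> (nat \<Rightarrow> nat \<Rightarrow> real) \<Rightarrow> nat \<Rightarrow> nat \<Rightarrow> real" where
  "a_step r A m l =
     (if m = r \<and> l = 0 then
        - (\<Sum>m'=0..r-1. A m' (r - m' - 1) / real (r - m'))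
      else if m \<le> r - 1 \<and> 1 \<le> l \<and> l \<le> r - m then
        (\<Sum>j=l-1..r-1-m. A m j / real (j+1) * real ((j+1) choose (j+1-l)) * bernoulli_plus (j+1-l))
      else if m \<le> r - 1 \<and> l = 0 then
        - (\<Sum>y=0..m. \<Sum>j=m-y-1..r-1-y. A y j *
             (\<Sum>l'=m-y-1..j. 1 / real (j+1) * real ((j+1) choose (j-l')) * bernoulli_plus (j-l')
                 * real ((l'+1) choose (m-y)) * (-1) ^ (1 + l' + y - m)))
      else 0)"

(* coefficients a(r,m,j); zero outside the index range 0 \<le> m \<le> r-1, 0 \<le> j \<le> r-1-m *)
fun acoef :: "nat \<Rightarrow> nat \<Rightarrow> nat \<Rightarrow> real" where
  "acoef 0 m j = 0"
| "acoef (Suc r) m j =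
     (if r = 0 then (if m = 0 \<and> j = 0 then 1 else 0) else a_step r (acoef r) m j)"

definition Tsum :: "int \<Rightarrow> int \<Rightarrow> nat \<Rightarrow> nat \<Rightarrow> real" where
  "Tsum q1 q2 u r = (\<Sum>n. harm q1 (n+1) * harm q2 (n+1) / ((real (n+1)) ^ u * real (n + 1 + r)))"

end

theory Submission
  imports Defs "HOL-Real_Asymp.Real_Asymp"
begin

text \<open>Two finite expansions turn the summand into a finite linear combination of summands of
  T(q1, q2, u, 1, r, 0). First, H_n^(p,s) = sum of a(s,m,j) n^j H_n^(p-m), by induction on s:
  summing the level-s expansion over i \<le> n needs sum_(i \<le> n) i^j H_i^(Q), which summation by
  parts against Faulhaber's polynomial F_j(n) = sum_(i \<le> n) i^j (with the Bernoulli numbers B^+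
  as coefficients) expresses through the n^e H_n^(Q-t); comparing coefficients yields exactly
  the recursion defining a(s+1, -, -). Second, the partial fraction decomposition
  1 / binom(n+k, k) = sum_r (-1)^(r+1) r binom(k, r) / (n + r).
  All resulting series converge because |H_n^(q)| \<le> (1 + ln n) n^max(0, 1-q), and
  m \<ge> s1 + s2 - 1 leaves a factor n^-2; hence the series may be split termwise.\<close>

section \<open>Faulhaber's formula\<close>

definition bernoulli_plus_fps :: "real fps" where
  "bernoulli_plus_fps = fps_X / (1 - fps_exp (-1))"

lemma bernoulli_plus_fps_nth: "bernoulli_plus j = fact j * fps_nth bernoulli_plus_fps j"
  by (simp add: bernoulli_plus_def bernoulli_plus_fps_def)

lemma bernoulli_plus_fps_mult: "bernoulli_plus_fps * (1 - fps_exp (-1)) = fps_X"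
proof -
  have "fps_nth (1 - fps_exp (-1) :: real fps) 1 \<noteq> 0"
    by simp
  then have nz: "(1 - fps_exp (-1) :: real fps) \<noteq> 0"
    by auto
  have "subdegree (1 - fps_exp (-1) :: real fps) \<le> subdegree (fps_X :: real fps)"
    by (simp add: subdegree_leI)
  then show ?thesis
    unfolding bernoulli_plus_fps_def by (rule fps_times_divide_eq[OF nz])
qed

lemma bernoulli_plus_0 [simp]: "bernoulli_plus 0 = 1"
proof -
  have "fps_nth (bernoulli_plus_fps * (1 - fps_exp (-1))) 1 = 1"
    by (simp add: bernoulli_plus_fps_mult)
  then show ?thesis
    by (simp add: fps_mult_nth bernoulli_plus_fps_nth)
qed

definition faulhaber_coeff :: "nat \<Rightarrow> nat \<Rightarrow> real" where
  "faulhaber_coeff j l = 1 / real (j+1) * real ((j+1) choose (j-l)) * bernoulli_plus (j-l)"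

definition faulhaber_poly :: "nat \<Rightarrow> real \<Rightarrow> real" where
  "faulhaber_poly j x = (\<Sum>l=0..j. faulhaber_coeff j l * x ^ (l+1))"

lemma faulhaber_coeff_eq:
  assumes "l \<le> j"
  shows "faulhaber_coeff j l = fact j / (fact (l+1) * fact (j-l)) * bernoulli_plus (j-l)"
proof -
  have "real ((j+1) choose (j-l)) = fact (j+1) / (fact (j-l) * fact (l+1))"
    using assms by (subst binomial_fact) (auto simp: Suc_diff_le)
  moreover have "(fact (j+1) :: real) = real (j+1) * fact j"
    by (simp del: of_nat_Suc)
  ultimately show ?thesis
    unfolding faulhaber_coeff_def by (simp add: field_simps del: of_nat_Suc)
qed

lemma sum_fps_exp_times_X:
  "(\<Sum>i=1..n. fps_exp (real i)) * fps_X = (fps_exp (real n) - 1) * bernoulli_plus_fps"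
proof -
  have telescope: "(\<Sum>i=1..n. fps_exp (real i)) * (1 - fps_exp (-1)) = fps_exp (real n) - 1"
  proof (induction n)
    case (Suc n)
    have "fps_exp (real (Suc n)) * fps_exp (-1) = fps_exp (real n)"
      by (simp flip: fps_exp_add_mult)
    with Suc show ?case
      by (simp add: algebra_simps)
  qed simp
  show ?thesis
    by (metis telescope bernoulli_plus_fps_mult mult.assoc mult.commute)
qed

theorem sum_power_eq_faulhaber_poly: "(\<Sum>i=1..n. real i ^ j) = faulhaber_poly j (real n)"
proof -
  let ?E = "fps_exp (real n) - 1 :: real fps"
  have "(\<Sum>i=1..n. real i ^ j) / fact j = fps_nth ((\<Sum>i=1..n. fps_exp (real i)) * fps_X) (j+1)"
    by (simp add: fps_sum_nth sum_divide_distrib)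
  also have "\<dots> = fps_nth (?E * bernoulli_plus_fps) (j+1)"
    by (simp only: sum_fps_exp_times_X)
  also have "\<dots> = (\<Sum>i=1..j+1. fps_nth ?E i * fps_nth bernoulli_plus_fps (j+1-i))"
    by (simp add: fps_mult_nth sum.atLeast_Suc_atMost)
  also have "\<dots> = (\<Sum>l=0..j. fps_nth ?E (l+1) * fps_nth bernoulli_plus_fps (j-l))"
    using sum.shift_bounds_cl_Suc_ivl[of "\<lambda>i. fps_nth ?E i * fps_nth bernoulli_plus_fps (j+1-i)" 0 j]
    by simp
  also have "\<dots> = (\<Sum>l=0..j. real n ^ (l+1) / fact (l+1) * (bernoulli_plus (j-l) / fact (j-l)))"
    by (intro sum.cong refl) (simp add: bernoulli_plus_fps_nth distrib_right)
  also have "\<dots> = faulhaber_poly j (real n) / fact j"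
    unfolding faulhaber_poly_def sum_divide_distrib
    by (intro sum.cong refl) (simp add: faulhaber_coeff_eq mult_ac)
  finally show ?thesis
    by simp
qed

section \<open>Expansion of hyperharmonic numbers\<close>

lemma harm_eq_sum_powi: "harm q n = (\<Sum>l=1..n. real l powi (-q))"
  unfolding harm_def by (auto intro!: sum.cong simp: power_int_def field_simps)

lemma harm_0 [simp]: "harm q 0 = 0"
  by (simp add: harm_eq_sum_powi)

lemma harm_Suc: "harm q (Suc n) = harm q n + real (Suc n) powi (-q)"
  by (simp add: harm_eq_sum_powi)

lemma faulhaber_poly_Suc: "faulhaber_poly j (real n + 1) = faulhaber_poly j (real n) + (real n + 1) ^ j"
  using sum_power_eq_faulhaber_poly[where n="Suc n" and j=j] sum_power_eq_faulhaber_poly[where n=n and j=j]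
  by (simp add: add.commute)

lemma faulhaber_poly_minus_one:
  "faulhaber_poly j (x - 1) =
     (\<Sum>l=0..j. faulhaber_coeff j l * (\<Sum>t=0..l+1. real ((l+1) choose t) * (-1)^(l+1-t) * x ^ t))"
proof -
  have binomial: "(x - 1) ^ e = (\<Sum>t=0..e. real (e choose t) * (-1)^(e-t) * x ^ t)" for e
    using binomial_ring[of x "-1" e] by (simp add: algebra_simps atLeast0AtMost)
  show ?thesis
    unfolding faulhaber_poly_def by (simp only: binomial)
qed

text \<open>Summation by parts with i^j = F_j(i) - F_j(i - 1); the binomial expansion of
  F_j(i - 1) i^-Q produces the terms of H^(Q-t).\<close>

lemma sum_power_mult_harm:
  "(\<Sum>i=1..n. real i ^ j * harm Q i) = faulhaber_poly j (real n) * harm Q n -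
     (\<Sum>l=0..j. faulhaber_coeff j l *
        (\<Sum>t=0..l+1. real ((l+1) choose t) * (-1)^(l+1-t) * harm (Q - int t) n))"
proof (induction n)
  case (Suc n)
  define x where "x = real n + 1"
  have harm_shift: "harm (Q - int t) (Suc n) = harm (Q - int t) n + x powi (-Q) * x ^ t" for t
  proof -
    have "x \<noteq> 0"
      by (simp add: x_def add_nonneg_eq_0_iff)
    then have "x powi (-(Q - int t)) = x powi (-Q) * x ^ t"
      using power_int_add[of x "-Q" "int t"] by simp
    then show ?thesis
      by (simp add: harm_Suc x_def add.commute)
  qed
  have "(\<Sum>l=0..j. faulhaber_coeff j l *
          (\<Sum>t=0..l+1. real ((l+1) choose t) * (-1)^(l+1-t) * harm (Q - int t) (Suc n)))
      = (\<Sum>l=0..j. faulhaber_coeff j l *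
          (\<Sum>t=0..l+1. real ((l+1) choose t) * (-1)^(l+1-t) * harm (Q - int t) n))
        + x powi (-Q) * faulhaber_poly j (x - 1)"
    unfolding harm_shift faulhaber_poly_minus_one
    by (simp add: algebra_simps sum.distrib sum_distrib_left)
  moreover have "harm Q (Suc n) = harm Q n + x powi (-Q)"
    using harm_shift[of 0] by simp
  moreover have "faulhaber_poly j (real (Suc n)) = faulhaber_poly j (real n) + x ^ j"
    using faulhaber_poly_Suc[of j n] by (simp add: x_def add.commute)
  moreover have "(\<Sum>i=1..Suc n. real i ^ j * harm Q i)
      = (\<Sum>i=1..n. real i ^ j * harm Q i) + x ^ j * harm Q (Suc n)"
    by (simp add: x_def add.commute)
  ultimately show ?case
    unfolding Suc.IH by (simp add: x_def algebra_simps)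
qed simp

lemma sum_a_step_power_eq_faulhaber:
  assumes "M < r"
  shows "(\<Sum>e=1..r-M. a_step r A M e * x ^ e) = (\<Sum>j=0..r-1-M. A M j * faulhaber_poly j x)"
proof -
  define f where "f e j = A M j * faulhaber_coeff j (e-1) * x ^ e" for e j
  have "(\<Sum>e=1..r-M. a_step r A M e * x ^ e) = (\<Sum>e\<in>{1..r-M}. \<Sum>j | j \<in> {0..r-1-M} \<and> e-1 \<le> j. f e j)"
  proof (intro sum.cong refl)
    fix e assume "e \<in> {1..r-M}"
    then have "a_step r A M e = (\<Sum>j=e-1..r-1-M. A M j * faulhaber_coeff j (e-1))"
      using assms by (simp add: a_step_def faulhaber_coeff_def mult_ac Suc_diff_le)
    then have "a_step r A M e * x ^ e = (\<Sum>j=e-1..r-1-M. f e j)"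
      by (simp add: f_def sum_distrib_right)
    also have "\<dots> = (\<Sum>j | j \<in> {0..r-1-M} \<and> e-1 \<le> j. f e j)"
      by (intro sum.cong) auto
    finally show "a_step r A M e * x ^ e = \<dots>" .
  qed
  also have "\<dots> = (\<Sum>j\<in>{0..r-1-M}. \<Sum>e | e \<in> {1..r-M} \<and> e-1 \<le> j. f e j)"
    by (rule sum.swap_restrict) auto
  also have "\<dots> = (\<Sum>j=0..r-1-M. \<Sum>l=0..j. f (Suc l) j)"
  proof (rule sum.cong[OF refl])
    fix j assume "j \<in> {0..r-1-M}"
    then have "{e. e \<in> {1..r-M} \<and> e-1 \<le> j} = {Suc 0..Suc j}"
      using assms by auto
    then show "(\<Sum>e | e \<in> {1..r-M} \<and> e-1 \<le> j. f e j) = (\<Sum>l=0..j. f (Suc l) j)"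
      by (simp only: sum.shift_bounds_cl_Suc_ivl)
  qed
  also have "\<dots> = (\<Sum>j=0..r-1-M. A M j * faulhaber_poly j x)"
    by (simp add: f_def faulhaber_poly_def sum_distrib_left mult_ac)
  finally show ?thesis .
qed

text \<open>Both branches of the recursion for the coefficient of n^0 are instances of one formula.\<close>

lemma a_step_zero:
  assumes "r \<ge> 1" "M \<le> r"
  shows "a_step r A M 0 = - (\<Sum>y | y \<le> M \<and> y < r. \<Sum>j=M-y-1..r-1-y. \<Sum>l=M-y-1..j.
           A y j * faulhaber_coeff j l * real ((l+1) choose (M-y)) * (-1)^(l+1-(M-y)))"
proof (cases "M = r")
  case True
  have "{y. y \<le> M \<and> y < r} = {0..r-1}"
    using True assms(1) by auto
  moreover have "(\<Sum>j=M-y-1..r-1-y. \<Sum>l=M-y-1..j.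
           A y j * faulhaber_coeff j l * real ((l+1) choose (M-y)) * (-1)^(l+1-(M-y)))
        = A y (r-y-1) / real (r-y)" if "y \<le> r-1" for y
    \<comment> \<open>only the top term \<open>j = l = r - y - 1\<close> survives\<close>
  proof -
    define d where "d = r - 1 - y"
    have bounds: "M - y - 1 = d" "r - 1 - y = d" "M - y = Suc d" "r - y - 1 = d" "r - y = Suc d"
      using that True assms(1) by (auto simp: d_def)
    show ?thesis
      unfolding bounds by (simp add: faulhaber_coeff_def)
  qed
  ultimately show ?thesis
    using True by (simp add: a_step_def)
next
  case False
  with assms(2) have range: "{y. y \<le> M \<and> y < r} = {0..M}" "M \<le> r - 1"
    by auto
  have sign: "1 + l + y - M = l + 1 - (M - y)" if "y \<le> M" for l y
    using that by arith
  from False range(2) have "a_step r A M 0 = - (\<Sum>y=0..M. \<Sum>j=M-y-1..r-1-y. A y j *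
      (\<Sum>l=M-y-1..j. faulhaber_coeff j l * real ((l+1) choose (M-y)) * (-1)^(1+l+y-M)))"
    by (simp add: a_step_def faulhaber_coeff_def)
  then show ?thesis
    unfolding range(1) by (auto intro!: sum.cong simp: sum_distrib_left mult.assoc sign)
qed

lemma sum_a_step_zero:
  assumes "r \<ge> 1"
  shows "(\<Sum>M=0..r. a_step r A M 0 * h M) = - (\<Sum>y=0..r-1. \<Sum>j=0..r-1-y. \<Sum>l=0..j. \<Sum>t=0..l+1.
           A y j * faulhaber_coeff j l * real ((l+1) choose t) * (-1)^(l+1-t) * h (y+t))"
proof -
  define W where "W y j l M =
    A y j * faulhaber_coeff j l * real ((l+1) choose (M-y)) * (-1)^(l+1-(M-y)) * h M" for y j l M
  have "(\<Sum>M=0..r. a_step r A M 0 * h M)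
      = - (\<Sum>M\<in>{0..r}. \<Sum>y | y \<le> M \<and> y < r. \<Sum>j\<in>{M-y-1..r-1-y}. \<Sum>l\<in>{M-y-1..j}. W y j l M)"
    using assms by (simp add: a_step_zero W_def sum_distrib_right sum_negf)
  also have "(\<Sum>M\<in>{0..r}. \<Sum>y | y \<le> M \<and> y < r. \<Sum>j\<in>{M-y-1..r-1-y}. \<Sum>l\<in>{M-y-1..j}. W y j l M)
      = (\<Sum>(M,y,j,l)\<in>(SIGMA M:{0..r}. SIGMA y:{y. y \<le> M \<and> y < r}. SIGMA j:{M-y-1..r-1-y}. {M-y-1..j}).
           W y j l M)"
    by (simp add: sum.Sigma finite_SigmaI)
  also have "\<dots> = (\<Sum>(y,j,l,M)\<in>(SIGMA y:{0..r-1}. SIGMA j:{0..r-1-y}. SIGMA l:{0..j}. {y..y+l+1}). W y j l M)"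
    by (rule sum.reindex_bij_witness[where i="\<lambda>(y,j,l,M). (M,y,j,l)" and j="\<lambda>(M,y,j,l). (y,j,l,M)"])
       (use assms in \<open>auto split: prod.splits\<close>)
  also have "\<dots> = (\<Sum>y=0..r-1. \<Sum>j=0..r-1-y. \<Sum>l=0..j. \<Sum>M=y..y+l+1. W y j l M)"
    by (simp add: sum.Sigma finite_SigmaI del: sum.cl_ivl_Suc)
  also have "\<dots> = (\<Sum>y=0..r-1. \<Sum>j=0..r-1-y. \<Sum>l=0..j. \<Sum>t=0..l+1.
           A y j * faulhaber_coeff j l * real ((l+1) choose t) * (-1)^(l+1-t) * h (y+t))"
    using sum.shift_bounds_cl_nat_ivl[of "W y j l" 0 y "l+1" for y j l]
    by (simp add: W_def add.commute)
  finally show ?thesis .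
qed

lemma sum_harm_expansion_eq_a_step:
  assumes "r \<ge> 1"
  shows "(\<Sum>i=1..n. \<Sum>y=0..r-1. \<Sum>j=0..r-1-y. A y j * real i ^ j * harm (q - int y) i)
       = (\<Sum>M=0..r. \<Sum>e=0..r-M. a_step r A M e * real n ^ e * harm (q - int M) n)"
proof -
  define H where "H M = harm (q - int M) n" for M
  define P where "P = (\<Sum>y=0..r-1. \<Sum>j=0..r-1-y. A y j * faulhaber_poly j (real n) * H y)"
  define Q where "Q = (\<Sum>y=0..r-1. \<Sum>j=0..r-1-y. \<Sum>l=0..j. \<Sum>t=0..l+1.
      A y j * faulhaber_coeff j l * real ((l+1) choose t) * (-1)^(l+1-t) * H (y+t))"
  have by_parts: "(\<Sum>i=1..n. real i ^ j * harm (q - int y) i) = faulhaber_poly j (real n) * H y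
      - (\<Sum>l=0..j. faulhaber_coeff j l * (\<Sum>t=0..l+1. real ((l+1) choose t) * (-1)^(l+1-t) * H (y+t)))"
    for y j
    using sum_power_mult_harm[where n=n and j=j and Q="q - int y"] by (simp add: H_def algebra_simps)
  have "(\<Sum>i=1..n. \<Sum>y=0..r-1. \<Sum>j=0..r-1-y. A y j * real i ^ j * harm (q - int y) i)
      = (\<Sum>y=0..r-1. \<Sum>j=0..r-1-y. \<Sum>i=1..n. A y j * real i ^ j * harm (q - int y) i)"
    by (subst sum.swap) (intro sum.cong refl sum.swap)
  also have "\<dots> = (\<Sum>y=0..r-1. \<Sum>j=0..r-1-y. A y j * (\<Sum>i=1..n. real i ^ j * harm (q - int y) i))"
    by (simp add: sum_distrib_left mult.assoc)
  also have "\<dots> = P - Q"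
    unfolding by_parts P_def Q_def right_diff_distrib sum_subtractf sum_distrib_left
    by (simp only: mult.assoc)
  finally have lhs: "(\<Sum>i=1..n. \<Sum>y=0..r-1. \<Sum>j=0..r-1-y. A y j * real i ^ j * harm (q - int y) i)
      = P - Q" .
  have "(\<Sum>M=0..r. \<Sum>e=0..r-M. a_step r A M e * real n ^ e * harm (q - int M) n)
      = (\<Sum>M=0..r. a_step r A M 0 * H M) + (\<Sum>M=0..r. (\<Sum>e=1..r-M. a_step r A M e * real n ^ e) * H M)"
    by (simp add: H_def sum.atLeast_Suc_atMost sum.distrib sum_distrib_right)
  also have "(\<Sum>M=0..r. (\<Sum>e=1..r-M. a_step r A M e * real n ^ e) * H M)
      = (\<Sum>M=0..r-1. (\<Sum>j=0..r-1-M. A M j * faulhaber_poly j (real n)) * H M)"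
  proof -
    obtain r' where r': "r = Suc r'"
      using assms by (cases r) auto
    then show ?thesis
      using sum_a_step_power_eq_faulhaber[of _ r A "real n"] by (simp add: sum.atLeast0_atMost_Suc)
  qed
  also have "\<dots> = P"
    by (simp add: P_def sum_distrib_right)
  also have "(\<Sum>M=0..r. a_step r A M 0 * H M) = - Q"
    unfolding Q_def using assms by (rule sum_a_step_zero)
  finally show ?thesis
    using lhs by simp
qed

theorem hyperharm_eq_sum_acoef:
  "hyperharm p (Suc r) n =
     (\<Sum>m=0..r. \<Sum>j=0..r-m. acoef (Suc r) m j * real n ^ j * harm (int p - int m) n)"
proof (induction r arbitrary: n)
  case (Suc r)
  have "hyperharm p (Suc (Suc r)) n = (\<Sum>i=1..n. hyperharm p (Suc r) i)"
    by simp
  also have "\<dots> = (\<Sum>i=1..n. \<Sum>m=0..Suc r-1. \<Sum>j=0..Suc r-1-m.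
      acoef (Suc r) m j * real i ^ j * harm (int p - int m) i)"
    using Suc.IH by simp
  also have "\<dots> = (\<Sum>m=0..Suc r. \<Sum>j=0..Suc r-m.
      a_step (Suc r) (acoef (Suc r)) m j * real n ^ j * harm (int p - int m) n)"
    by (rule sum_harm_expansion_eq_a_step) simp
  finally show ?case
    by simp
qed simp

section \<open>Partial fractions of the inverse binomial coefficient\<close>

lemma sum_alternating_binomial_div_pochhammer:
  fixes x :: "'a :: field_char_0"
  assumes "pochhammer x (Suc k) \<noteq> 0"
  shows "(\<Sum>r=0..k. (-1)^r * of_nat (k choose r) / (x + of_nat r)) = fact k / pochhammer x (Suc k)"
  using assms
proof (induction k arbitrary: x)
  case (Suc k)
  define h where "h y = (\<Sum>r=0..k. (-1)^r * of_nat (k choose r) / (y + of_nat r))" for y :: 'a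
  have "pochhammer x (Suc k) * (x + of_nat (Suc k)) \<noteq> 0"
    using Suc.prems unfolding pochhammer_Suc[of x "Suc k"] .
  moreover have "x * pochhammer (x + 1) (Suc k) \<noteq> 0"
    using Suc.prems unfolding pochhammer_rec[of x "Suc k"] .
  ultimately have nonzero: "pochhammer x (Suc k) \<noteq> 0" "x + of_nat (Suc k) \<noteq> 0"
    "x \<noteq> 0" "pochhammer (x + 1) (Suc k) \<noteq> 0"
    by simp_all
  have IH: "h x = fact k / pochhammer x (Suc k)" "h (x + 1) = fact k / pochhammer (x + 1) (Suc k)"
    unfolding h_def using nonzero by (auto intro!: Suc.IH)
  have hx: "h x = 1 / x + (\<Sum>r=0..k. (-1)^Suc r * of_nat (k choose Suc r) / (x + of_nat (Suc r)))"
  proof -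
    have "h x = (\<Sum>r=0..Suc k. (-1)^r * of_nat (k choose r) / (x + of_nat r))"
      by (simp add: h_def)
    then show ?thesis
      by (simp only: sum.atLeast0_atMost_Suc_shift) simp
  qed
  have hx1: "h (x + 1) = - (\<Sum>r=0..k. (-1)^Suc r * of_nat (k choose r) / (x + of_nat (Suc r)))"
    by (simp add: h_def sum_negf add.assoc)
  have "(\<Sum>r=0..Suc k. (-1)^r * of_nat (Suc k choose r) / (x + of_nat r))
      = 1 / x + (\<Sum>r=0..k. (-1)^Suc r * of_nat (Suc k choose Suc r) / (x + of_nat (Suc r)))"
    by (simp only: sum.atLeast0_atMost_Suc_shift) simp
  also have "\<dots> = 1 / x + (\<Sum>r=0..k. (-1)^Suc r * of_nat (k choose r) / (x + of_nat (Suc r)))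
      + (\<Sum>r=0..k. (-1)^Suc r * of_nat (k choose Suc r) / (x + of_nat (Suc r)))"
    by (simp add: sum.distrib[symmetric] ring_distribs add_divide_distrib diff_divide_distrib)
  also have "\<dots> = h x - h (x + 1)"
    unfolding hx hx1 by simp
  also have "\<dots> = fact (Suc k) / pochhammer x (Suc (Suc k))"
  proof -
    have "fact k / pochhammer x (Suc k) = fact k * (x + of_nat (Suc k)) / pochhammer x (Suc (Suc k))"
      using nonzero by (simp add: pochhammer_Suc[of x "Suc k"])
    moreover have "fact k / pochhammer (x + 1) (Suc k) = fact k * x / pochhammer x (Suc (Suc k))"
      using nonzero by (simp add: pochhammer_rec[of x "Suc k"])
    ultimately show ?thesis
      unfolding IH by (simp add: diff_divide_distrib[symmetric] algebra_simps)
  qed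
  finally show ?case .
qed simp

lemma inverse_binomial_partial_fractions:
  assumes "N \<ge> 1" "k \<ge> 1"
  shows "1 / real ((N + k) choose k)
       = (\<Sum>r=1..k. (-1)^(r+1) * real r * real (k choose r) / (real N + real r))"
proof -
  have poch: "pochhammer (real N) (Suc k) \<noteq> 0"
    using assms(1) by (simp add: pochhammer_eq_0_iff)
  have alternating: "(\<Sum>r=0..k. (-1)^r * real (k choose r)) = 0"
    using choose_alternating_sum[of k, where 'a=real] assms(2) by (simp add: atLeast0AtMost)
  have "(\<Sum>r=1..k. (-1)^(r+1) * real r * real (k choose r) / (real N + real r))
      = (\<Sum>r=0..k. (-1)^(r+1) * real r * real (k choose r) / (real N + real r))"
    by (simp add: sum.atLeast_Suc_atMost[of 0 k])
  also have "\<dots> = (\<Sum>r=0..k. real N * ((-1)^r * real (k choose r) / (real N + real r))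
                        - (-1)^r * real (k choose r))"
    using assms(1) by (intro sum.cong refl) (simp add: field_simps)
  also have "\<dots> = real N * (fact k / pochhammer (real N) (Suc k))"
    unfolding sum_subtractf sum_distrib_left[symmetric] alternating
    sum_alternating_binomial_div_pochhammer[OF poch] by simp
  also have "\<dots> = fact k / pochhammer (real N + 1) k"
    using assms(1) by (simp add: pochhammer_rec)
  also have "\<dots> = 1 / real ((N + k) choose k)"
    by (simp add: binomial_gbinomial gbinomial_pochhammer' add.commute)
  finally show ?thesis
    by (rule sym)
qed

section \<open>Convergence and the main theorem\<close>

lemma harmonic_le_one_plus_ln: "N \<ge> 1 \<Longrightarrow> Harmonic_Numbers.harm N \<le> 1 + ln (real N)"
  using euler_mascheroni_sequence_decreasing[of 1 N] by (simp add: Harmonic_Numbers.harm_def)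

lemma abs_harm_le:
  assumes "N \<ge> 1"
  shows "\<bar>harm q N\<bar> \<le> (1 + ln (real N)) * real N ^ nat (1 - q)"
proof (cases "q \<ge> 1")
  case True
  then have "harm q N = (\<Sum>j=1..N. 1 / real j ^ nat q)"
    by (simp add: harm_def)
  also have "\<dots> \<le> (\<Sum>j=1..N. inverse (real j))"
  proof (rule sum_mono)
    fix j assume j: "j \<in> {1..N}"
    then have "real j ^ 1 \<le> real j ^ nat q"
      using True by (intro power_increasing) auto
    with j show "1 / real j ^ nat q \<le> inverse (real j)"
      by (simp add: field_simps)
  qed
  also have "\<dots> \<le> 1 + ln (real N)"
    using harmonic_le_one_plus_ln[OF assms] by (simp add: Harmonic_Numbers.harm_def)
  finally show ?thesis
    using True by (simp add: harm_def sum_nonneg)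
next
  case False
  then have "harm q N = (\<Sum>l=1..N. real l ^ nat (- q))"
    by (simp add: harm_def)
  also have "\<dots> \<le> (\<Sum>l=1..N. real N ^ nat (- q))"
    by (intro sum_mono power_mono) auto
  also have "\<dots> = real N ^ nat (1 - q)"
  proof -
    have "nat (1 - q) = Suc (nat (- q))"
      using False by simp
    then show ?thesis
      by simp
  qed
  also have "\<dots> \<le> (1 + ln (real N)) * real N ^ nat (1 - q)"
    using assms by (simp add: mult_le_cancel_right1)
  finally show ?thesis
    using False by (simp add: harm_def sum_nonneg)
qed

definition Tsum_term :: "int \<Rightarrow> int \<Rightarrow> nat \<Rightarrow> nat \<Rightarrow> nat \<Rightarrow> real" where
  "Tsum_term q1 q2 u r n = harm q1 (n+1) * harm q2 (n+1) / (real (n+1) ^ u * real (n + 1 + r))"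

lemma Tsum_eq_suminf: "Tsum q1 q2 u r = suminf (Tsum_term q1 q2 u r)"
  unfolding Tsum_def Tsum_term_def ..

lemma abs_Tsum_term_le:
  assumes "nat (1 - q1) + nat (1 - q2) + 1 \<le> u"
  shows "\<bar>Tsum_term q1 q2 u r n\<bar> \<le> (1 + ln (real (n+1)))^2 / real (n+1)^2"
proof -
  define N where "N = real (n+1)"
  define L where "L = 1 + ln N"
  define a where "a = nat (1 - q1) + nat (1 - q2)"
  have N: "N \<ge> 1"
    by (simp add: N_def)
  have "\<bar>harm q1 (n+1) * harm q2 (n+1)\<bar> \<le> (L * N ^ nat (1 - q1)) * (L * N ^ nat (1 - q2))"
    unfolding abs_mult L_def N_def by (intro mult_mono abs_harm_le) auto
  also have "\<dots> = L^2 * N ^ a"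
    by (simp add: a_def power_add power2_eq_square)
  finally have numerator: "\<bar>harm q1 (n+1) * harm q2 (n+1)\<bar> \<le> L^2 * N ^ a" .
  have "N ^ a * N^2 = N ^ (a + 1) * N"
    by (simp add: power_add power2_eq_square)
  also have "\<dots> \<le> N ^ u * real (n + 1 + r)"
    using N assms by (intro mult_mono power_increasing) (auto simp: a_def N_def)
  finally have denominator: "N ^ a * N^2 \<le> N ^ u * real (n + 1 + r)" .
  have "\<bar>Tsum_term q1 q2 u r n\<bar> = \<bar>harm q1 (n+1) * harm q2 (n+1)\<bar> / (N ^ u * real (n + 1 + r))"
    by (simp add: Tsum_term_def N_def abs_divide)
  also have "\<dots> \<le> L^2 * N ^ a / (N ^ a * N^2)"
    using numerator denominator N by (intro frac_le) auto
  also have "\<dots> = L^2 / N^2"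
    using N by simp
  finally show ?thesis
    by (simp add: L_def N_def)
qed

lemma summable_Tsum_term:
  assumes "nat (1 - q1) + nat (1 - q2) + 1 \<le> u"
  shows "summable (Tsum_term q1 q2 u r)"
proof (rule summable_comparison_test_bigo)
  show "summable (\<lambda>n. norm (real n powr (-3/2)))"
    by (simp add: summable_real_powr_iff)
  have "Tsum_term q1 q2 u r \<in> O(\<lambda>n. (1 + ln (real (n+1)))^2 / real (n+1)^2)"
    using abs_Tsum_term_le[OF assms] by (intro bigoI[where c=1]) auto
  also have "(\<lambda>n. (1 + ln (real (n+1)))^2 / real (n+1)^2) \<in> O(\<lambda>n. real n powr (-3/2))"
    by real_asymp
  finally show "Tsum_term q1 q2 u r \<in> O(\<lambda>n. real n powr (-3/2))" .
qed

lemma hyperharm_product_div_binomial_eq: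
  fixes s1 s2 p1 p2 m k :: nat
  assumes "s1 \<ge> 1" "s2 \<ge> 1" "k \<ge> 1" "m \<ge> s1 + s2 - 1"
  shows "hyperharm p1 s1 (n+1) * hyperharm p2 s2 (n+1) / ((real (n+1)) ^ m * real ((n + 1 + k) choose k))
     = (\<Sum>l1=0..s1-1. \<Sum>t1=0..s1-1-l1. \<Sum>l2=0..s2-1. \<Sum>t2=0..s2-1-l2.
          acoef s1 l1 t1 * acoef s2 l2 t2 *
          (\<Sum>r=1..k. (-1) ^ (r+1) * real r * real (k choose r) *
             Tsum_term (int p1 - int l1) (int p2 - int l2) (m - t1 - t2) r n))"
proof -
  define N where "N = real (n+1)"
  define c where "c r = (-1) ^ (r+1) * real r * real (k choose r)" for r
  define H1 where "H1 l = harm (int p1 - int l) (n+1)" for l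
  define H2 where "H2 l = harm (int p2 - int l) (n+1)" for l
  have N: "N > 0"
    by (simp add: N_def)
  have expand1: "hyperharm p1 s1 (n+1) = (\<Sum>l1=0..s1-1. \<Sum>t1=0..s1-1-l1. acoef s1 l1 t1 * N ^ t1 * H1 l1)"
    using assms(1) hyperharm_eq_sum_acoef[of p1 "s1 - 1" "n+1"] by (simp add: N_def H1_def)
  have expand2: "hyperharm p2 s2 (n+1) = (\<Sum>l2=0..s2-1. \<Sum>t2=0..s2-1-l2. acoef s2 l2 t2 * N ^ t2 * H2 l2)"
    using assms(2) hyperharm_eq_sum_acoef[of p2 "s2 - 1" "n+1"] by (simp add: N_def H2_def)
  have binomial: "1 / real ((n + 1 + k) choose k) = (\<Sum>r=1..k. c r / (N + real r))"
    using inverse_binomial_partial_fractions[of "n+1" k] assms(3) by (simp add: N_def c_def)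
  have summand: "a1 * N ^ t1 * H1 l1 * (a2 * N ^ t2 * H2 l2) / (N ^ m * real ((n + 1 + k) choose k))
      = (\<Sum>r=1..k. a1 * a2 * (c r * Tsum_term (int p1 - int l1) (int p2 - int l2) (m - t1 - t2) r n))"
    if "t1 + t2 \<le> m" for a1 a2 l1 l2 t1 t2
  proof -
    define u where "u = m - t1 - t2"
    have "N ^ m = N ^ u * N ^ t1 * N ^ t2"
      using that by (simp add: u_def flip: power_add)
    then have "a1 * N ^ t1 * H1 l1 * (a2 * N ^ t2 * H2 l2) / (N ^ m * real ((n + 1 + k) choose k))
        = a1 * a2 * (H1 l1 * H2 l2 / N ^ u) * (1 / real ((n + 1 + k) choose k))"
      using N by (simp add: field_simps)
    also have "\<dots> = a1 * a2 * (\<Sum>r=1..k. c r * (H1 l1 * H2 l2 / (N ^ u * (N + real r))))"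
      unfolding binomial sum_distrib_left by (simp add: field_simps)
    finally show ?thesis
      by (simp add: u_def Tsum_term_def N_def H1_def H2_def add.assoc sum_distrib_left)
  qed
  show ?thesis
    unfolding N_def[symmetric] expand1 expand2 sum_distrib_right
    unfolding sum_distrib_left sum_divide_distrib c_def[symmetric]
    using assms(4) by (intro sum.cong refl summand) auto
qed

theorem theorem3:
  fixes s1 s2 p1 p2 m k :: nat
  assumes "s1 \<ge> 1" "s2 \<ge> 1" "p1 \<ge> 1" "p2 \<ge> 1" "m \<ge> 1" "k \<ge> 1"
    and "m \<ge> s1 + s2 - 1"
  shows "(\<Sum>n. hyperharm p1 s1 (n+1) * hyperharm p2 s2 (n+1)
              / ((real (n+1)) ^ m * real ((n + 1 + k) choose k)))
       = (\<Sum>l1=0..s1-1. \<Sum>t1=0..s1-1-l1. \<Sum>l2=0..s2-1. \<Sum>t2=0..s2-1-l2.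
            acoef s1 l1 t1 * acoef s2 l2 t2 *
            (\<Sum>r=1..k. (-1) ^ (r+1) * real r * real (k choose r) *
               Tsum (int p1 - int l1) (int p2 - int l2) (m - t1 - t2) r))"
proof -
  have summable: "summable (Tsum_term (int p1 - int l1) (int p2 - int l2) (m - t1 - t2) r)"
    if "l1 + t1 \<le> s1 - 1" "l2 + t2 \<le> s2 - 1" for l1 t1 l2 t2 r
  proof (rule summable_Tsum_term)
    have "nat (1 - (int p1 - int l1)) \<le> l1" "nat (1 - (int p2 - int l2)) \<le> l2"
      using assms(3,4) by arith+
    then show "nat (1 - (int p1 - int l1)) + nat (1 - (int p2 - int l2)) + 1 \<le> m - t1 - t2"
      using that assms(1,2,7) by arith
  qed
  have "(\<lambda>n. \<Sum>l1=0..s1-1. \<Sum>t1=0..s1-1-l1. \<Sum>l2=0..s2-1. \<Sum>t2=0..s2-1-l2.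
          acoef s1 l1 t1 * acoef s2 l2 t2 *
          (\<Sum>r=1..k. (-1) ^ (r+1) * real r * real (k choose r) *
             Tsum_term (int p1 - int l1) (int p2 - int l2) (m - t1 - t2) r n))
      sums (\<Sum>l1=0..s1-1. \<Sum>t1=0..s1-1-l1. \<Sum>l2=0..s2-1. \<Sum>t2=0..s2-1-l2.
            acoef s1 l1 t1 * acoef s2 l2 t2 *
            (\<Sum>r=1..k. (-1) ^ (r+1) * real r * real (k choose r) *
               Tsum (int p1 - int l1) (int p2 - int l2) (m - t1 - t2) r))"
    unfolding Tsum_eq_suminf by (intro sums_sum sums_mult summable_sums summable) auto
  then show ?thesis
    by (simp only: hyperharm_product_div_binomial_eq[OF assms(1,2,6,7)] sums_unique[symmetric])
qed

end
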